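(* Let $k$ be a real constant and, on the region $x^2-y^2>0$, let $V(x,y)=k(x^2-y^2)^{-2/3}$. With $L=x\dot y-y\dot x$, the function $$J=(\dot y^2-\dot x^2)L+4V(x,y)\,(y\dot x+x\dot y)$$ is a first integral of $\ddot x=-V_{,x}$, $\ddot y=-V_{,y}$.
   Context: A first integral is a function of $(t,x,y,\dot x,\dot y)$ whose total time derivative vanishes along every solution of the given equations of motion. *)

theory Defs
  imports "HOL-Analysis.Analysis"
begin

definition V :: "real \<Rightarrow> real \<Rightarrow> real \<Rightarrow> real" where
  "V k x y = k * (x\<^sup>2 - y\<^sup>2) powr (-2/3)"

definition J :: "real \<Rightarrow> real \<Rightarrow> real \<Rightarrow> real \<Rightarrow> real \<Rightarrow> real" where
  "J k x y xd yd = (yd\<^sup>2 - xd\<^sup>2) * (x * yd - y * xd) + 4 * V k x y * (y * xd + x * yd)"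

end

theory Submission
  imports Defs
begin

text \<open>
  On the region \<open>P = x\<^sup>2 - y\<^sup>2 > 0\<close> the potential satisfies \<open>dV = -(2/3) V dP/P\<close>, so the
  equations of motion read \<open>x'' = 4xV/(3P)\<close>, \<open>y'' = -4yV/(3P)\<close>. Differentiating \<open>J\<close> along a
  motion and substituting these expressions for \<open>x''\<close>, \<open>y''\<close> and \<open>V'\<close> leaves a rational
  function of \<open>x, y, x', y', V\<close> that vanishes identically.
\<close>

lemma V_has_derivative_along_curve:
  fixes x y :: "real \<Rightarrow> real"
  assumes region: "(x t)\<^sup>2 - (y t)\<^sup>2 > 0"
    and dx: "(x has_real_derivative a) (at t within S)"
    and dy: "(y has_real_derivative b) (at t within S)"
  shows "((\<lambda>s. V k (x s) (y s)) has_real_derivative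
           - 4 * V k (x t) (y t) * (x t * a - y t * b) / (3 * ((x t)\<^sup>2 - (y t)\<^sup>2)))
         (at t within S)"
proof -
  define P where "P = (x t)\<^sup>2 - (y t)\<^sup>2"
  have "P > 0" using region by (simp add: P_def)
  have "((\<lambda>z. z powr (-2/3)) has_real_derivative (-2/3) * P powr (-2/3 - 1)) (at P)"
    using \<open>P > 0\<close> by (rule has_real_derivative_powr)
  moreover have "((\<lambda>s. (x s)\<^sup>2 - (y s)\<^sup>2) has_real_derivative 2 * x t * a - 2 * y t * b)
                   (at t within S)"
    by (auto intro!: derivative_eq_intros dx dy)
  ultimately have "((\<lambda>s. V k (x s) (y s)) has_real_derivative
      k * ((-2/3) * P powr (-2/3 - 1) * (2 * x t * a - 2 * y t * b))) (at t within S)"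
    unfolding V_def P_def by (intro DERIV_cmult) (rule DERIV_chain2)
  moreover have "P powr (-2/3 - 1) = P powr (-2/3) / P"
    using \<open>P > 0\<close> powr_diff[of P "-2/3" 1] by simp
  then have "k * ((-2/3) * P powr (-2/3 - 1) * (2 * x t * a - 2 * y t * b))
      = - 4 * V k (x t) (y t) * (x t * a - y t * b) / (3 * P)"
    using \<open>P > 0\<close> by (simp add: V_def P_def field_simps)
  ultimately show ?thesis unfolding P_def by (simp only:)
qed

lemma V_partial_x:
  assumes "x\<^sup>2 - y\<^sup>2 > 0"
  shows "((\<lambda>u. V k u y) has_real_derivative - 4 * x * V k x y / (3 * (x\<^sup>2 - y\<^sup>2))) (at x)"
  using V_has_derivative_along_curve[of "\<lambda>u. u" x "\<lambda>_. y" 1 UNIV 0 k] assms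
  by (simp add: DERIV_ident ac_simps)

lemma V_partial_y:
  assumes "x\<^sup>2 - y\<^sup>2 > 0"
  shows "((\<lambda>v. V k x v) has_real_derivative 4 * y * V k x y / (3 * (x\<^sup>2 - y\<^sup>2))) (at y)"
  using V_has_derivative_along_curve[of "\<lambda>_. x" y "\<lambda>v. v" 0 UNIV 1 k] assms
  by (simp add: DERIV_ident ac_simps)

lemma J_stationary_under_force_law:
  fixes x y xd yd :: "real \<Rightarrow> real"
  assumes region: "(x t)\<^sup>2 - (y t)\<^sup>2 > 0"
    and dx: "(x has_real_derivative xd t) (at t)"
    and dy: "(y has_real_derivative yd t) (at t)"
    and dxd: "(xd has_real_derivative xdd) (at t)"
    and dyd: "(yd has_real_derivative ydd) (at t)"
    and force_x: "xdd = 4 * x t * V k (x t) (y t) / (3 * ((x t)\<^sup>2 - (y t)\<^sup>2))"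
    and force_y: "ydd = - 4 * y t * V k (x t) (y t) / (3 * ((x t)\<^sup>2 - (y t)\<^sup>2))"
  shows "((\<lambda>s. J k (x s) (y s) (xd s) (yd s)) has_real_derivative 0) (at t)"
proof -
  define P where "P = (x t)\<^sup>2 - (y t)\<^sup>2"
  define v where "v = V k (x t) (y t)"
  have "P \<noteq> 0" using region by (simp add: P_def)
  have "((\<lambda>s. J k (x s) (y s) (xd s) (yd s)) has_real_derivative
      (2 * yd t * ydd - 2 * xd t * xdd) * (x t * yd t - y t * xd t)
      + ((yd t)\<^sup>2 - (xd t)\<^sup>2) * (x t * ydd - y t * xdd)
      + 4 * (- 4 * v * (x t * xd t - y t * yd t) / (3 * P)) * (y t * xd t + x t * yd t)
      + 4 * v * (2 * xd t * yd t + y t * xdd + x t * ydd)) (at t)"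
    unfolding J_def P_def v_def
    by (rule derivative_eq_intros refl V_has_derivative_along_curve[OF region dx dy]
          dx dy dxd dyd)+
       (simp add: power2_eq_square algebra_simps)
  moreover have "(2 * yd t * ydd - 2 * xd t * xdd) * (x t * yd t - y t * xd t)
      + ((yd t)\<^sup>2 - (xd t)\<^sup>2) * (x t * ydd - y t * xdd)
      + 4 * (- 4 * v * (x t * xd t - y t * yd t) / (3 * P)) * (y t * xd t + x t * yd t)
      + 4 * v * (2 * xd t * yd t + y t * xdd + x t * ydd) = 0"
    unfolding force_x force_y P_def[symmetric] v_def[symmetric] using \<open>P \<noteq> 0\<close>
    by (simp add: divide_simps) (simp add: P_def power2_eq_square algebra_simps)
  ultimately show ?thesis by simp
qed

theorem mainTheorem5:
  fixes k :: real and I :: "real set"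
    and x y xd yd xdd ydd :: "real \<Rightarrow> real"
  assumes "open I"
    and region: "\<And>t. t \<in> I \<Longrightarrow> (x t)\<^sup>2 - (y t)\<^sup>2 > 0"
    and dx: "\<And>t. t \<in> I \<Longrightarrow> (x has_real_derivative xd t) (at t)"
    and dy: "\<And>t. t \<in> I \<Longrightarrow> (y has_real_derivative yd t) (at t)"
    and dxd: "\<And>t. t \<in> I \<Longrightarrow> (xd has_real_derivative xdd t) (at t)"
    and dyd: "\<And>t. t \<in> I \<Longrightarrow> (yd has_real_derivative ydd t) (at t)"
    and eqx: "\<And>t. t \<in> I \<Longrightarrow> xdd t = - deriv (\<lambda>u. V k u (y t)) (x t)"
    and eqy: "\<And>t. t \<in> I \<Longrightarrow> ydd t = - deriv (\<lambda>v. V k (x t) v) (y t)"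
    and "t \<in> I"
  shows "((\<lambda>s. J k (x s) (y s) (xd s) (yd s)) has_real_derivative 0) (at t)"
proof (rule J_stationary_under_force_law)
  show region_t: "(x t)\<^sup>2 - (y t)\<^sup>2 > 0" using region \<open>t \<in> I\<close> .
  show "xdd t = 4 * x t * V k (x t) (y t) / (3 * ((x t)\<^sup>2 - (y t)\<^sup>2))"
    using eqx[OF \<open>t \<in> I\<close>] DERIV_imp_deriv[OF V_partial_x[OF region_t]] by simp
  show "ydd t = - 4 * y t * V k (x t) (y t) / (3 * ((x t)\<^sup>2 - (y t)\<^sup>2))"
    using eqy[OF \<open>t \<in> I\<close>] DERIV_imp_deriv[OF V_partial_y[OF region_t]] by simp
qed (use \<open>t \<in> I\<close> dx dy dxd dyd in auto)

end
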